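(* The objects of the Quillen category $\mathcal{A}_p(S)$ (i.e. the elementary abelian subgroups of $S$) are exactly the elements of the disjoint union of the sets $\mathcal{C}(L)$ for $L \in \mathcal{L}$.
   Context: Conventions: for a group $G$ acting on the right on an additive abelian group $M$, $Z^n(G,M)$, $B^n(G,M)$ are the normalised cocycles and coboundaries; for $\tau \in Z^2(G,M)$, $\mathrm{Ext}(\tau)$ is $G\times M$ with $(g,m)(h,n) = (gh, m^h+n+\tau(g,h))$. Setting: $p$ prime, $S$ an infinite pro-$p$-group of finite coclass, $T = \gamma_\ell(S)$ for $\ell$ large enough so that $T \cong \mathbb{Z}_p^d$, $P = S/T$ is a finite $p$-group and the series $T_0 = T$, $T_{i+1}=[T_i,S]$ has all indices $p$. $T$ is written additively as a $P$-module by conjugation, and $S$ is identified with $\mathrm{Ext}(\rho)$ for some $\rho \in Z^2(P,T)$, with $\epsilon: S \to P$, $(w,t)\mapsto w$, and $T$ identified with $\{(1,t)\}$. For $L \leq P$ let $\overline{L} = \epsilon^{-1}(L)$. Let $\mathcal{L}$ be the set of elementary abelian subgroups $L \leq P$ such that the restriction $\rho_L$ lies in $B^2(L,T)$ (equivalently $\overline{L}$ splits over $T$). For $L \in \mathcal{L}$ fix a complement $C_L = \{c_L(l) \mid l \in L\}$ to $T$ in $\overline{L}$, with $c_L(l) = (l, t_L(l))$. For $\delta \in Z^1(L,T)$ put $C_L(\delta) = \{(l, t_L(l)+\delta(l)) \mid l \in L\}$ and $\mathcal{C}(L) = \{ C_L(\delta) \mid \delta \in Z^1(L,T)\}$. The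 Quillen category $\mathcal{A}_p(S)$ has as objects the elementary abelian subgroups of $S$ and as morphisms the injective homomorphisms induced by conjugation in $S$. *)

theory Defs
  imports "HOL-Algebra.Algebra" "HOL-Library.FuncSet"
begin

(* The p-adic integers Z_p, as compatible sequences of residues a n in [0, p^n),
   with addition mod p^n; written in HOL-Algebra (multiplicative) notation. *)
definition Zp :: "nat \<Rightarrow> (nat \<Rightarrow> int) monoid" where
  "Zp p = \<lparr> carrier = {a. \<forall>n. 0 \<le> a n \<and> a n < int p ^ n \<and> a (Suc n) mod (int p ^ n) = a n},
           monoid.mult = (\<lambda>a b n. (a n + b n) mod (int p ^ n)),
           monoid.one = (\<lambda>n. 0) \<rparr>"

definition Zpd :: "nat \<Rightarrow> nat \<Rightarrow> (nat \<Rightarrow> nat \<Rightarrow> int) monoid" where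
  "Zpd p d = \<lparr> carrier = PiE {..<d} (\<lambda>_. carrier (Zp p)),
              monoid.mult = (\<lambda>v w. restrict (\<lambda>i. v i \<otimes>\<^bsub>Zp p\<^esub> w i) {..<d}),
              monoid.one = restrict (\<lambda>_. \<one>\<^bsub>Zp p\<^esub>) {..<d} \<rparr>"

definition finite_p_group :: "nat \<Rightarrow> ('g, 'b) monoid_scheme \<Rightarrow> bool" where
  "finite_p_group p P \<longleftrightarrow> group P \<and> finite (carrier P) \<and> (\<exists>k. order P = p ^ k)"

(* right action of P on the abelian group T by automorphisms: m^h = act h m *)
definition right_module :: "('g, 'b) monoid_scheme \<Rightarrow> ('t, 'c) monoid_scheme \<Rightarrow> ('g \<Rightarrow> 't \<Rightarrow> 't) \<Rightarrow> bool" where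
  "right_module P T act \<longleftrightarrow>
     (\<forall>g\<in>carrier P. act g \<in> hom T T \<and> bij_betw (act g) (carrier T) (carrier T)) \<and>
     (\<forall>m\<in>carrier T. act \<one>\<^bsub>P\<^esub> m = m) \<and>
     (\<forall>g\<in>carrier P. \<forall>h\<in>carrier P. \<forall>m\<in>carrier T. act h (act g m) = act (g \<otimes>\<^bsub>P\<^esub> h) m)"

(* normalised 2-cocycles, for the convention (g,m)(h,n) = (gh, m^h + n + tau(g,h)) *)
definition Z2 :: "('g, 'b) monoid_scheme \<Rightarrow> ('t, 'c) monoid_scheme \<Rightarrow> ('g \<Rightarrow> 't \<Rightarrow> 't) \<Rightarrow> ('g \<Rightarrow> 'g \<Rightarrow> 't) set" where
  "Z2 G T act = {\<tau>. (\<forall>g\<in>carrier G. \<forall>h\<in>carrier G. \<tau> g h \<in> carrier T) \<and>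
     (\<forall>g\<in>carrier G. \<tau> \<one>\<^bsub>G\<^esub> g = \<one>\<^bsub>T\<^esub> \<and> \<tau> g \<one>\<^bsub>G\<^esub> = \<one>\<^bsub>T\<^esub>) \<and>
     (\<forall>g\<in>carrier G. \<forall>h\<in>carrier G. \<forall>k\<in>carrier G.
        act k (\<tau> g h) \<otimes>\<^bsub>T\<^esub> \<tau> (g \<otimes>\<^bsub>G\<^esub> h) k = \<tau> h k \<otimes>\<^bsub>T\<^esub> \<tau> g (h \<otimes>\<^bsub>G\<^esub> k))}"

definition B2 :: "('g, 'b) monoid_scheme \<Rightarrow> ('t, 'c) monoid_scheme \<Rightarrow> ('g \<Rightarrow> 't \<Rightarrow> 't) \<Rightarrow> ('g \<Rightarrow> 'g \<Rightarrow> 't) set" where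
  "B2 G T act = {\<tau>. \<exists>f. f \<in> carrier G \<rightarrow> carrier T \<and> f \<one>\<^bsub>G\<^esub> = \<one>\<^bsub>T\<^esub> \<and>
     (\<forall>g\<in>carrier G. \<forall>h\<in>carrier G.
        \<tau> g h = f (g \<otimes>\<^bsub>G\<^esub> h) \<otimes>\<^bsub>T\<^esub> inv\<^bsub>T\<^esub> (act h (f g) \<otimes>\<^bsub>T\<^esub> f h))}"

definition Z1 :: "('g, 'b) monoid_scheme \<Rightarrow> ('t, 'c) monoid_scheme \<Rightarrow> ('g \<Rightarrow> 't \<Rightarrow> 't) \<Rightarrow> ('g \<Rightarrow> 't) set" where
  "Z1 G T act = {\<delta>. \<delta> \<in> carrier G \<rightarrow> carrier T \<and>
     (\<forall>g\<in>carrier G. \<forall>h\<in>carrier G. \<delta> (g \<otimes>\<^bsub>G\<^esub> h) = act h (\<delta> g) \<otimes>\<^bsub>T\<^esub> \<delta> h)}"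

definition Ext :: "('g, 'b) monoid_scheme \<Rightarrow> ('t, 'c) monoid_scheme \<Rightarrow> ('g \<Rightarrow> 't \<Rightarrow> 't) \<Rightarrow> ('g \<Rightarrow> 'g \<Rightarrow> 't) \<Rightarrow> ('g \<times> 't) monoid" where
  "Ext G T act \<tau> = \<lparr> carrier = carrier G \<times> carrier T,
     monoid.mult = (\<lambda>(g, m) (h, n). (g \<otimes>\<^bsub>G\<^esub> h, act h m \<otimes>\<^bsub>T\<^esub> n \<otimes>\<^bsub>T\<^esub> \<tau> g h)),
     monoid.one = (\<one>\<^bsub>G\<^esub>, \<one>\<^bsub>T\<^esub>) \<rparr>"

(* elementary abelian p-subgroup (the trivial subgroup included) *)
definition elem_ab :: "nat \<Rightarrow> ('a, 'b) monoid_scheme \<Rightarrow> 'a set \<Rightarrow> bool" where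
  "elem_ab p G E \<longleftrightarrow> subgroup E G \<and> (\<forall>x\<in>E. \<forall>y\<in>E. x \<otimes>\<^bsub>G\<^esub> y = y \<otimes>\<^bsub>G\<^esub> x) \<and>
     (\<forall>x\<in>E. x [^]\<^bsub>G\<^esub> p = \<one>\<^bsub>G\<^esub>)"

definition is_complement :: "('a, 'b) monoid_scheme \<Rightarrow> 'a set \<Rightarrow> 'a set \<Rightarrow> 'a set \<Rightarrow> bool" where
  "is_complement G H K M \<longleftrightarrow> subgroup H G \<and> H \<subseteq> M \<and> H \<inter> K = {\<one>\<^bsub>G\<^esub>} \<and> H <#>\<^bsub>G\<^esub> K = M"

definition Tsub :: "('g, 'b) monoid_scheme \<Rightarrow> ('t, 'c) monoid_scheme \<Rightarrow> ('g \<times> 't) set" where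
  "Tsub P T = {(\<one>\<^bsub>P\<^esub>, t) | t. t \<in> carrier T}"

(* \<overline>L = \<epsilon>^{-1}(L) *)
definition Lbar :: "('t, 'c) monoid_scheme \<Rightarrow> 'g set \<Rightarrow> ('g \<times> 't) set" where
  "Lbar T L = L \<times> carrier T"

definition calL :: "nat \<Rightarrow> ('g, 'b) monoid_scheme \<Rightarrow> ('t, 'c) monoid_scheme \<Rightarrow> ('g \<Rightarrow> 't \<Rightarrow> 't) \<Rightarrow> ('g \<Rightarrow> 'g \<Rightarrow> 't) \<Rightarrow> 'g set set" where
  "calL p P T act \<rho> = {L. elem_ab p P L \<and> \<rho> \<in> B2 (P\<lparr>carrier := L\<rparr>) T act}"

definition CLdelta :: "('t, 'c) monoid_scheme \<Rightarrow> ('g \<Rightarrow> 't) \<Rightarrow> 'g set \<Rightarrow> ('g \<Rightarrow> 't) \<Rightarrow> ('g \<times> 't) set" where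
  "CLdelta T tL L \<delta> = {(l, tL l \<otimes>\<^bsub>T\<^esub> \<delta> l) | l. l \<in> L}"

definition calC :: "('g, 'b) monoid_scheme \<Rightarrow> ('t, 'c) monoid_scheme \<Rightarrow> ('g \<Rightarrow> 't \<Rightarrow> 't) \<Rightarrow> ('g \<Rightarrow> 't) \<Rightarrow> 'g set \<Rightarrow> ('g \<times> 't) set set" where
  "calC P T act tL L = {CLdelta T tL L \<delta> | \<delta>. \<delta> \<in> Z1 (P\<lparr>carrier := L\<rparr>) T act}"

(* the series T_0 = T, T_{i+1} = [T_i, S] (computed via the action: [(1,t),(g,m)] = (1, -t + t^g)) *)
primrec Tser :: "('g, 'b) monoid_scheme \<Rightarrow> ('t, 'c) monoid_scheme \<Rightarrow> ('g \<Rightarrow> 't \<Rightarrow> 't) \<Rightarrow> nat \<Rightarrow> 't set" where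
  "Tser P T act 0 = carrier T"
| "Tser P T act (Suc i) = generate T {inv\<^bsub>T\<^esub> t \<otimes>\<^bsub>T\<^esub> act g t | t g. t \<in> Tser P T act i \<and> g \<in> carrier P}"

end

theory Submission
  imports Defs
begin

text \<open>Since \<open>T \<cong> \<int>\<^sub>p\<^sup>d\<close> has no elements of order \<open>p\<close>, an elementary abelian subgroup \<open>E\<close> of
  \<open>S = Ext(\<rho>)\<close> meets \<open>T\<close> trivially, so it is the graph \<open>{(l, s l) | l \<in> L}\<close> of a function
  \<open>s\<close> on \<open>L = \<epsilon>(E)\<close>. The group \<open>L\<close> is elementary abelian, and multiplicativity of
  \<open>l \<mapsto> (l, s l)\<close> says precisely that \<open>\<rho>\<^sub>L\<close> is the coboundary of \<open>s\<close>; thus \<open>L \<in> \<L>\<close>, and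
  \<open>\<delta> = s - t\<^sub>L\<close> is a 1-cocycle with \<open>E = C\<^sub>L(\<delta>)\<close>. Conversely, for \<open>\<delta> \<in> Z\<^sup>1(L,T)\<close> the map
  \<open>l \<mapsto> (l, t\<^sub>L(l) + \<delta>(l))\<close> is a homomorphism on \<open>L\<close>, so its image \<open>C\<^sub>L(\<delta>)\<close> is elementary
  abelian. Finally \<open>\<epsilon>(C) = L\<close> for every \<open>C \<in> \<C>(L)\<close>, which makes the union disjoint.\<close>

definition p_torsion_free :: "nat \<Rightarrow> ('a, 'b) monoid_scheme \<Rightarrow> bool" where
  "p_torsion_free p G \<longleftrightarrow> (\<forall>x\<in>carrier G. x [^]\<^bsub>G\<^esub> p = \<one>\<^bsub>G\<^esub> \<longrightarrow> x = \<one>\<^bsub>G\<^esub>)"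

lemma Zp_carrier:
  "a \<in> carrier (Zp p) \<longleftrightarrow> (\<forall>n. 0 \<le> a n \<and> a n < int p ^ n \<and> a (Suc n) mod int p ^ n = a n)"
  by (simp add: Zp_def)

lemma Zp_mult: "a \<otimes>\<^bsub>Zp p\<^esub> b = (\<lambda>n. (a n + b n) mod int p ^ n)"
  by (simp add: Zp_def)

lemma Zp_one: "\<one>\<^bsub>Zp p\<^esub> = (\<lambda>n. 0)"
  by (simp add: Zp_def)

lemma Zp_monoid:
  assumes "0 < p"
  shows "monoid (Zp p)"
proof (rule monoidI)
  have pos: "0 < int p ^ n" for n using assms by simp
  fix a b assume ab: "a \<in> carrier (Zp p)" "b \<in> carrier (Zp p)"
  have "(a (Suc n) + b (Suc n)) mod int p ^ Suc n mod int p ^ n = (a n + b n) mod int p ^ n" for n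
  proof -
    have "(a (Suc n) + b (Suc n)) mod int p ^ Suc n mod int p ^ n
        = (a (Suc n) mod int p ^ n + b (Suc n) mod int p ^ n) mod int p ^ n"
      by (simp add: mod_mod_cancel mod_add_eq)
    also have "\<dots> = (a n + b n) mod int p ^ n"
      using ab by (simp add: Zp_carrier)
    finally show ?thesis .
  qed
  then show "a \<otimes>\<^bsub>Zp p\<^esub> b \<in> carrier (Zp p)"
    using pos by (simp add: Zp_carrier Zp_mult)
next
  show "\<one>\<^bsub>Zp p\<^esub> \<in> carrier (Zp p)" using assms by (simp add: Zp_carrier Zp_one)
next
  fix a b c :: "nat \<Rightarrow> int"
  show "a \<otimes>\<^bsub>Zp p\<^esub> b \<otimes>\<^bsub>Zp p\<^esub> c = a \<otimes>\<^bsub>Zp p\<^esub> (b \<otimes>\<^bsub>Zp p\<^esub> c)"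
    by (simp add: Zp_mult mod_add_left_eq mod_add_right_eq add.assoc)
next
  fix a assume "a \<in> carrier (Zp p)"
  then show "\<one>\<^bsub>Zp p\<^esub> \<otimes>\<^bsub>Zp p\<^esub> a = a" "a \<otimes>\<^bsub>Zp p\<^esub> \<one>\<^bsub>Zp p\<^esub> = a"
    by (simp_all add: Zp_carrier Zp_mult Zp_one fun_eq_iff)
qed

lemma Zp_nat_pow: "a [^]\<^bsub>Zp p\<^esub> (k::nat) = (\<lambda>n. int k * a n mod int p ^ n)"
  by (induction k) (simp_all add: Zp_one Zp_mult mod_add_right_eq algebra_simps)

lemma Zp_p_torsion_free:
  assumes p: "0 < p"
  shows "p_torsion_free p (Zp p)"
  unfolding p_torsion_free_def
proof (intro ballI impI ext)
  fix a n assume a: "a \<in> carrier (Zp p)" and a_p: "a [^]\<^bsub>Zp p\<^esub> p = \<one>\<^bsub>Zp p\<^esub>"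
  have "int p * int p ^ n dvd int p * a (Suc n)"
    using fun_cong[OF a_p, of "Suc n"] by (simp add: Zp_nat_pow Zp_one mod_eq_0_iff_dvd)
  then have "int p ^ n dvd a (Suc n)" using p by simp
  then show "a n = \<one>\<^bsub>Zp p\<^esub> n"
    using a by (metis Zp_carrier Zp_one dvd_imp_mod_0)
qed

lemma Zpd_carrier: "carrier (Zpd p d) = PiE {..<d} (\<lambda>_. carrier (Zp p))"
  by (simp add: Zpd_def)

lemma Zpd_mult: "v \<otimes>\<^bsub>Zpd p d\<^esub> w = restrict (\<lambda>i. v i \<otimes>\<^bsub>Zp p\<^esub> w i) {..<d}"
  by (simp add: Zpd_def)

lemma Zpd_one: "\<one>\<^bsub>Zpd p d\<^esub> = restrict (\<lambda>_. \<one>\<^bsub>Zp p\<^esub>) {..<d}"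
  by (simp add: Zpd_def)

lemma Zpd_monoid:
  assumes "0 < p"
  shows "monoid (Zpd p d)"
proof -
  interpret Zp: monoid "Zp p" using Zp_monoid[OF assms] .
  show ?thesis
    by (rule monoidI) (auto simp: Zpd_carrier Zpd_mult Zpd_one PiE_iff Zp.m_assoc
        extensional_def cong: if_cong)
qed

lemma Zpd_nat_pow: "v [^]\<^bsub>Zpd p d\<^esub> (k::nat) = restrict (\<lambda>i. v i [^]\<^bsub>Zp p\<^esub> k) {..<d}"
  by (induction k) (simp_all add: Zpd_one Zpd_mult cong: if_cong)

lemma Zpd_p_torsion_free:
  assumes p: "0 < p"
  shows "p_torsion_free p (Zpd p d)"
  unfolding p_torsion_free_def
proof (intro ballI impI, rule ext)
  fix v i assume v: "v \<in> carrier (Zpd p d)" and v_p: "v [^]\<^bsub>Zpd p d\<^esub> p = \<one>\<^bsub>Zpd p d\<^esub>"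
  show "v i = \<one>\<^bsub>Zpd p d\<^esub> i"
  proof (cases "i < d")
    case True
    then show ?thesis
      using fun_cong[OF v_p, of i] v Zp_p_torsion_free[OF p] unfolding p_torsion_free_def
      by (simp add: Zpd_nat_pow Zpd_one Zpd_carrier PiE_iff)
  next
    case False
    then show ?thesis using v by (simp add: Zpd_one Zpd_carrier PiE_iff extensional_def)
  qed
qed

lemma iso_p_torsion_free:
  assumes G: "group G" and H: "monoid H" and iso: "G \<cong> H" and H_free: "p_torsion_free p H"
  shows "p_torsion_free p G"
  unfolding p_torsion_free_def
proof (intro ballI impI)
  fix x assume x: "x \<in> carrier G" and x_p: "x [^]\<^bsub>G\<^esub> p = \<one>\<^bsub>G\<^esub>"
  obtain \<phi> where \<phi>: "\<phi> \<in> iso G H" using iso unfolding is_iso_def by blast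
  interpret \<phi>: group_hom G H \<phi>
    using \<phi> G group.iso_imp_group[OF G iso H] by (simp add: group_hom_def group_hom_axioms_def iso_def)
  have "\<phi> x = \<one>\<^bsub>H\<^esub>"
    using H_free x x_p \<phi>.hom_nat_pow[OF x, of p] unfolding p_torsion_free_def by simp
  then show "x = \<one>\<^bsub>G\<^esub>"
    using \<phi> x unfolding iso_def bij_betw_def by (metis (mono_tags) G group.is_monoid
        \<phi>.hom_one inj_onD mem_Collect_eq monoid.one_closed)
qed

definition graph_on :: "'a set \<Rightarrow> ('a \<Rightarrow> 'b) \<Rightarrow> ('a \<times> 'b) set" where
  "graph_on L f = {(l, f l) | l. l \<in> L}"

lemma fst_image_graph_on [simp]: "fst ` graph_on L f = L"
  unfolding graph_on_def by force

lemma graph_on_image: "graph_on L f = (\<lambda>l. (l, f l)) ` L"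
  unfolding graph_on_def by blast

lemma graph_on_cong: "(\<And>l. l \<in> L \<Longrightarrow> f l = g l) \<Longrightarrow> graph_on L f = graph_on L g"
  unfolding graph_on_def by force

lemma graph_on_inv_into_fst:
  assumes "inj_on fst E"
  shows "E = graph_on (fst ` E) (\<lambda>l. snd (inv_into E fst l))"
proof -
  have "inv_into E fst (fst x) = x" if "x \<in> E" for x
    using assms that by (rule inv_into_f_f)
  then show ?thesis unfolding graph_on_def by (safe; metis image_eqI prod.collapse)
qed

lemma CLdelta_eq_graph_on: "CLdelta T t L \<delta> = graph_on L (\<lambda>l. t l \<otimes>\<^bsub>T\<^esub> \<delta> l)"
  unfolding CLdelta_def graph_on_def ..

lemma elem_ab_hom_image:
  assumes G: "group G" and H: "group H" and E: "elem_ab p G E"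
    and h: "h \<in> hom (G\<lparr>carrier := E\<rparr>) H"
  shows "elem_ab p H (h ` E)"
proof -
  have sub: "subgroup E G" and comm: "\<forall>x\<in>E. \<forall>y\<in>E. x \<otimes>\<^bsub>G\<^esub> y = y \<otimes>\<^bsub>G\<^esub> x"
    and pow: "\<forall>x\<in>E. x [^]\<^bsub>G\<^esub> p = \<one>\<^bsub>G\<^esub>"
    using E unfolding elem_ab_def by blast+
  interpret h: group_hom "G\<lparr>carrier := E\<rparr>" H h
    using subgroup.subgroup_is_group[OF sub G] H h by (simp add: group_hom_def group_hom_axioms_def)
  have "subgroup (h ` E) H" using h.img_is_subgroup by simp
  moreover have "h x \<otimes>\<^bsub>H\<^esub> h y = h y \<otimes>\<^bsub>H\<^esub> h x" if "x \<in> E" "y \<in> E" for x y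
    using that comm h.hom_mult[of x y] h.hom_mult[of y x] by simp
  moreover have "h x [^]\<^bsub>H\<^esub> p = \<one>\<^bsub>H\<^esub>" if "x \<in> E" for x
    using that pow h.hom_nat_pow[of x p] h.hom_one by (simp add: nat_pow_def)
  ultimately show ?thesis unfolding elem_ab_def by blast
qed

locale extension = P: group P + T: comm_group T
  for P :: "('g, 'b) monoid_scheme" and T :: "('t, 'c) monoid_scheme" +
  fixes act :: "'g \<Rightarrow> 't \<Rightarrow> 't" and \<rho> :: "'g \<Rightarrow> 'g \<Rightarrow> 't"
  assumes module: "right_module P T act" and cocycle: "\<rho> \<in> Z2 P T act"
begin

abbreviation S where "S \<equiv> Ext P T act \<rho>"

lemma act_hom: "g \<in> carrier P \<Longrightarrow> act g \<in> hom T T"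
  using module unfolding right_module_def by blast

lemma act_closed [simp]: "g \<in> carrier P \<Longrightarrow> m \<in> carrier T \<Longrightarrow> act g m \<in> carrier T"
  using act_hom by (blast intro: hom_in_carrier)

lemma act_mult:
  "g \<in> carrier P \<Longrightarrow> m \<in> carrier T \<Longrightarrow> n \<in> carrier T \<Longrightarrow>
   act g (m \<otimes>\<^bsub>T\<^esub> n) = act g m \<otimes>\<^bsub>T\<^esub> act g n"
  using act_hom by (blast intro: hom_mult)

lemma act_one [simp]: "g \<in> carrier P \<Longrightarrow> act g \<one>\<^bsub>T\<^esub> = \<one>\<^bsub>T\<^esub>"
  using act_hom hom_one T.is_group by blast

lemma act_one_left [simp]: "m \<in> carrier T \<Longrightarrow> act \<one>\<^bsub>P\<^esub> m = m"
  using module unfolding right_module_def by blast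

lemma act_act:
  "g \<in> carrier P \<Longrightarrow> h \<in> carrier P \<Longrightarrow> m \<in> carrier T \<Longrightarrow>
   act h (act g m) = act (g \<otimes>\<^bsub>P\<^esub> h) m"
  using module unfolding right_module_def by blast

lemma act_surj: "g \<in> carrier P \<Longrightarrow> act g ` carrier T = carrier T"
  using module unfolding right_module_def bij_betw_def by blast

lemma cocycle_closed [simp]: "g \<in> carrier P \<Longrightarrow> h \<in> carrier P \<Longrightarrow> \<rho> g h \<in> carrier T"
  using cocycle unfolding Z2_def by blast

lemma cocycle_one [simp]:
  "g \<in> carrier P \<Longrightarrow> \<rho> \<one>\<^bsub>P\<^esub> g = \<one>\<^bsub>T\<^esub>"
  "g \<in> carrier P \<Longrightarrow> \<rho> g \<one>\<^bsub>P\<^esub> = \<one>\<^bsub>T\<^esub>"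
  using cocycle unfolding Z2_def by blast+

lemma cocycle_identity:
  "g \<in> carrier P \<Longrightarrow> h \<in> carrier P \<Longrightarrow> k \<in> carrier P \<Longrightarrow>
   act k (\<rho> g h) \<otimes>\<^bsub>T\<^esub> \<rho> (g \<otimes>\<^bsub>P\<^esub> h) k = \<rho> h k \<otimes>\<^bsub>T\<^esub> \<rho> g (h \<otimes>\<^bsub>P\<^esub> k)"
  using cocycle unfolding Z2_def by blast

lemma Ext_mult [simp]:
  "(g, m) \<otimes>\<^bsub>S\<^esub> (h, n) = (g \<otimes>\<^bsub>P\<^esub> h, act h m \<otimes>\<^bsub>T\<^esub> n \<otimes>\<^bsub>T\<^esub> \<rho> g h)"
  by (simp add: Ext_def)

lemma Ext_one [simp]: "\<one>\<^bsub>S\<^esub> = (\<one>\<^bsub>P\<^esub>, \<one>\<^bsub>T\<^esub>)"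
  by (simp add: Ext_def)

lemma Ext_carrier [simp]: "carrier S = carrier P \<times> carrier T"
  by (simp add: Ext_def)

lemma Ext_group: "group S"
proof (rule groupI)
  fix x y assume "x \<in> carrier S" "y \<in> carrier S"
  then show "x \<otimes>\<^bsub>S\<^esub> y \<in> carrier S" by auto
next
  show "\<one>\<^bsub>S\<^esub> \<in> carrier S" by simp
next
  fix x assume "x \<in> carrier S"
  then show "\<one>\<^bsub>S\<^esub> \<otimes>\<^bsub>S\<^esub> x = x" by auto
next
  fix x y z assume "x \<in> carrier S" "y \<in> carrier S" "z \<in> carrier S"
  then obtain g m h n k q where xyz: "x = (g, m)" "y = (h, n)" "z = (k, q)"
    and in_P: "g \<in> carrier P" "h \<in> carrier P" "k \<in> carrier P"
    and in_T: "m \<in> carrier T" "n \<in> carrier T" "q \<in> carrier T"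
    by auto
  have "act k (act h m \<otimes>\<^bsub>T\<^esub> n \<otimes>\<^bsub>T\<^esub> \<rho> g h) \<otimes>\<^bsub>T\<^esub> q \<otimes>\<^bsub>T\<^esub> \<rho> (g \<otimes>\<^bsub>P\<^esub> h) k
      = act (h \<otimes>\<^bsub>P\<^esub> k) m \<otimes>\<^bsub>T\<^esub> act k n \<otimes>\<^bsub>T\<^esub> q
          \<otimes>\<^bsub>T\<^esub> (act k (\<rho> g h) \<otimes>\<^bsub>T\<^esub> \<rho> (g \<otimes>\<^bsub>P\<^esub> h) k)"
    using in_P in_T by (simp add: act_mult act_act T.m_ac)
  also have "\<dots> = act (h \<otimes>\<^bsub>P\<^esub> k) m \<otimes>\<^bsub>T\<^esub> (act k n \<otimes>\<^bsub>T\<^esub> q \<otimes>\<^bsub>T\<^esub> \<rho> h k) \<otimes>\<^bsub>T\<^esub> \<rho> g (h \<otimes>\<^bsub>P\<^esub> k)"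
    using in_P in_T by (simp add: cocycle_identity T.m_ac)
  finally show "x \<otimes>\<^bsub>S\<^esub> y \<otimes>\<^bsub>S\<^esub> z = x \<otimes>\<^bsub>S\<^esub> (y \<otimes>\<^bsub>S\<^esub> z)"
    using xyz in_P by (simp add: P.m_assoc)
next
  fix x assume "x \<in> carrier S"
  then obtain g m where x: "x = (g, m)" "g \<in> carrier P" "m \<in> carrier T" by auto
  \<comment> \<open>the left inverse of \<open>(g, m)\<close> is \<open>(g\<inverse>, n)\<close> with \<open>n\<^sup>g = -m - \<rho>(g\<inverse>, g)\<close>\<close>
  have "inv\<^bsub>T\<^esub> (m \<otimes>\<^bsub>T\<^esub> \<rho> (inv\<^bsub>P\<^esub> g) g) \<in> act g ` carrier T"
    using act_surj[OF x(2)] x by simp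
  then obtain n where n: "n \<in> carrier T" "act g n = inv\<^bsub>T\<^esub> (m \<otimes>\<^bsub>T\<^esub> \<rho> (inv\<^bsub>P\<^esub> g) g)"
    by (metis imageE)
  have "(inv\<^bsub>P\<^esub> g, n) \<otimes>\<^bsub>S\<^esub> x = \<one>\<^bsub>S\<^esub>"
    using x n by (simp add: T.m_assoc)
  then show "\<exists>y\<in>carrier S. y \<otimes>\<^bsub>S\<^esub> x = \<one>\<^bsub>S\<^esub>" using n x by force
qed

lemma fst_hom: "fst \<in> hom S P"
  unfolding hom_def by (auto simp: Ext_def)

lemma pow_Tsub: "t \<in> carrier T \<Longrightarrow> (\<one>\<^bsub>P\<^esub>, t) [^]\<^bsub>S\<^esub> (n::nat) = (\<one>\<^bsub>P\<^esub>, t [^]\<^bsub>T\<^esub> n)"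
  by (induction n) auto

\<comment> \<open>\<open>splitting L f\<close>: the restriction of \<open>\<rho>\<close> to \<open>L\<close> is the coboundary of \<open>f\<close>, i.e.
  \<open>l \<mapsto> (l, f l)\<close> is multiplicative.\<close>
definition splitting :: "'g set \<Rightarrow> ('g \<Rightarrow> 't) \<Rightarrow> bool" where
  "splitting L f \<longleftrightarrow> f \<in> L \<rightarrow> carrier T \<and>
     (\<forall>g\<in>L. \<forall>h\<in>L. f (g \<otimes>\<^bsub>P\<^esub> h) = act h (f g) \<otimes>\<^bsub>T\<^esub> f h \<otimes>\<^bsub>T\<^esub> \<rho> g h)"

lemma splitting_one:
  assumes f: "splitting L f" and L: "subgroup L P"
  shows "f \<one>\<^bsub>P\<^esub> = \<one>\<^bsub>T\<^esub>"
proof -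
  have one: "\<one>\<^bsub>P\<^esub> \<in> L" and f_one: "f \<one>\<^bsub>P\<^esub> \<in> carrier T"
    using f subgroup.one_closed[OF L] unfolding splitting_def by auto
  have "f (\<one>\<^bsub>P\<^esub> \<otimes>\<^bsub>P\<^esub> \<one>\<^bsub>P\<^esub>) = act \<one>\<^bsub>P\<^esub> (f \<one>\<^bsub>P\<^esub>) \<otimes>\<^bsub>T\<^esub> f \<one>\<^bsub>P\<^esub> \<otimes>\<^bsub>T\<^esub> \<rho> \<one>\<^bsub>P\<^esub> \<one>\<^bsub>P\<^esub>"
    using f one unfolding splitting_def by blast
  then have "f \<one>\<^bsub>P\<^esub> \<otimes>\<^bsub>T\<^esub> f \<one>\<^bsub>P\<^esub> = f \<one>\<^bsub>P\<^esub> \<otimes>\<^bsub>T\<^esub> \<one>\<^bsub>T\<^esub>"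
    using f_one by simp
  then show ?thesis using f_one by (meson T.l_cancel T.one_closed)
qed

lemma splitting_hom:
  assumes "subgroup L P" and "splitting L f"
  shows "(\<lambda>l. (l, f l)) \<in> hom (P\<lparr>carrier := L\<rparr>) S"
  using assms subgroup.subset[OF assms(1)] unfolding splitting_def hom_def
  by (auto simp: Pi_iff)

lemma splitting_if_subgroup_graph_on:
  assumes sub: "subgroup (graph_on L f) S"
  shows "splitting L f"
  unfolding splitting_def
proof (intro conjI ballI)
  show "f \<in> L \<rightarrow> carrier T"
    using subgroup.subset[OF sub] unfolding graph_on_def by auto
  fix g h assume "g \<in> L" "h \<in> L"
  then have "(g, f g) \<otimes>\<^bsub>S\<^esub> (h, f h) \<in> graph_on L f"
    by (intro subgroup.m_closed[OF sub]) (auto simp: graph_on_def)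
  then show "f (g \<otimes>\<^bsub>P\<^esub> h) = act h (f g) \<otimes>\<^bsub>T\<^esub> f h \<otimes>\<^bsub>T\<^esub> \<rho> g h"
    by (auto simp: graph_on_def)
qed

lemma splitting_coboundary:
  assumes L: "subgroup L P" and f: "splitting L f"
  shows "\<rho> \<in> B2 (P\<lparr>carrier := L\<rparr>) T act"
  unfolding B2_def
proof (intro CollectI exI[of _ f] conjI ballI)
  show "f \<in> carrier (P\<lparr>carrier := L\<rparr>) \<rightarrow> carrier T" "f \<one>\<^bsub>P\<lparr>carrier := L\<rparr>\<^esub> = \<one>\<^bsub>T\<^esub>"
    using f splitting_one[OF f L] unfolding splitting_def by auto
  fix g h assume "g \<in> carrier (P\<lparr>carrier := L\<rparr>)" "h \<in> carrier (P\<lparr>carrier := L\<rparr>)"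
  then have "g \<in> carrier P" "h \<in> carrier P" "f g \<in> carrier T" "f h \<in> carrier T"
    and rel: "f (g \<otimes>\<^bsub>P\<^esub> h) = act h (f g) \<otimes>\<^bsub>T\<^esub> f h \<otimes>\<^bsub>T\<^esub> \<rho> g h"
    using f subgroup.subset[OF L] unfolding splitting_def by auto
  then show "\<rho> g h = f (g \<otimes>\<^bsub>P\<lparr>carrier := L\<rparr>\<^esub> h) \<otimes>\<^bsub>T\<^esub> inv\<^bsub>T\<^esub> (act h (f g) \<otimes>\<^bsub>T\<^esub> f h)"
    by (subst T.inv_solve_right) (auto simp: T.m_ac)
qed

lemma splitting_cong:
  "subgroup L P \<Longrightarrow> (\<And>l. l \<in> L \<Longrightarrow> f l = g l) \<Longrightarrow> splitting L f \<longleftrightarrow> splitting L g"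
  unfolding splitting_def by (simp add: Pi_iff subgroup.m_closed)

lemma splitting_twist_iff:
  assumes L: "subgroup L P" and t: "splitting L t" and \<delta>: "\<delta> \<in> L \<rightarrow> carrier T"
  shows "splitting L (\<lambda>l. t l \<otimes>\<^bsub>T\<^esub> \<delta> l) \<longleftrightarrow> \<delta> \<in> Z1 (P\<lparr>carrier := L\<rparr>) T act"
proof -
  have in_T: "l \<in> carrier P" "t l \<in> carrier T" "\<delta> l \<in> carrier T" if "l \<in> L" for l
    using that t \<delta> subgroup.subset[OF L] unfolding splitting_def by auto
  have "t (g \<otimes>\<^bsub>P\<^esub> h) \<otimes>\<^bsub>T\<^esub> \<delta> (g \<otimes>\<^bsub>P\<^esub> h)
          = act h (t g \<otimes>\<^bsub>T\<^esub> \<delta> g) \<otimes>\<^bsub>T\<^esub> (t h \<otimes>\<^bsub>T\<^esub> \<delta> h) \<otimes>\<^bsub>T\<^esub> \<rho> g h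
    \<longleftrightarrow> \<delta> (g \<otimes>\<^bsub>P\<^esub> h) = act h (\<delta> g) \<otimes>\<^bsub>T\<^esub> \<delta> h"
    if gh: "g \<in> L" "h \<in> L" for g h
  proof -
    have "act h (t g \<otimes>\<^bsub>T\<^esub> \<delta> g) \<otimes>\<^bsub>T\<^esub> (t h \<otimes>\<^bsub>T\<^esub> \<delta> h) \<otimes>\<^bsub>T\<^esub> \<rho> g h
        = t (g \<otimes>\<^bsub>P\<^esub> h) \<otimes>\<^bsub>T\<^esub> (act h (\<delta> g) \<otimes>\<^bsub>T\<^esub> \<delta> h)"
      using t gh in_T[OF gh(1)] in_T[OF gh(2)] unfolding splitting_def by (simp add: act_mult T.m_ac)
    then show ?thesis
      using gh in_T subgroup.m_closed[OF L gh] by (simp add: T.l_cancel)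
  qed
  then show ?thesis
    using \<delta> in_T unfolding splitting_def Z1_def by (auto simp: Pi_iff)
qed

lemma inj_on_fst_elem_ab:
  assumes T_free: "p_torsion_free p T"
    and E: "elem_ab p S E"
  shows "inj_on fst E"
proof (rule inj_onI)
  interpret S: group S by (rule Ext_group)
  interpret fst: group_hom S P fst
    using fst_hom Ext_group P.is_group by (simp add: group_hom_def group_hom_axioms_def)
  have sub: "subgroup E S" and pow: "\<forall>z\<in>E. z [^]\<^bsub>S\<^esub> p = \<one>\<^bsub>S\<^esub>"
    using E unfolding elem_ab_def by blast+
  fix x y assume xy: "x \<in> E" "y \<in> E" "fst x = fst y"
  then have xy_S: "x \<in> carrier S" "y \<in> carrier S" using subgroup.subset[OF sub] by auto
  \<comment> \<open>\<open>x\<inverse>y\<close> lies in \<open>E \<inter> T\<close>, which is trivial because \<open>T\<close> has no elements of order \<open>p\<close>\<close>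
  define z where "z = inv\<^bsub>S\<^esub> x \<otimes>\<^bsub>S\<^esub> y"
  have z_E: "z \<in> E" unfolding z_def using sub xy by (simp add: subgroup.m_closed subgroup.m_inv_closed)
  have "fst z = inv\<^bsub>P\<^esub> fst x \<otimes>\<^bsub>P\<^esub> fst y"
    unfolding z_def using xy_S S.inv_closed[OF xy_S(1)] by (simp only: fst.hom_mult fst.hom_inv)
  then have "fst z = \<one>\<^bsub>P\<^esub>" using xy(3) xy_S by auto
  moreover have "z \<in> carrier S" using z_E subgroup.subset[OF sub] by blast
  ultimately obtain t where z: "z = (\<one>\<^bsub>P\<^esub>, t)" and t: "t \<in> carrier T" by (cases z) auto
  have "t [^]\<^bsub>T\<^esub> p = \<one>\<^bsub>T\<^esub>" using pow z_E z pow_Tsub[OF t, of p] by simp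
  then have "inv\<^bsub>S\<^esub> x \<otimes>\<^bsub>S\<^esub> y = \<one>\<^bsub>S\<^esub>"
    using T_free z t unfolding z_def p_torsion_free_def by simp
  then show "x = y" using xy_S by (simp add: S.inv_solve_left')
qed

lemma elem_ab_graph_on:
  assumes L: "elem_ab p P L" and f: "splitting L f"
  shows "elem_ab p S (graph_on L f)"
proof -
  have "subgroup L P" using L unfolding elem_ab_def by blast
  then show ?thesis
    unfolding graph_on_image
    using elem_ab_hom_image[OF P.is_group Ext_group L splitting_hom[OF _ f]] by blast
qed

lemma elem_ab_eq_graph_on:
  assumes T_free: "p_torsion_free p T"
    and E: "elem_ab p S E"
  obtains L f where "elem_ab p P L" "splitting L f" "E = graph_on L f"
proof -
  let ?L = "fst ` E" and ?f = "\<lambda>l. snd (inv_into E fst l)"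
  have graph: "E = graph_on ?L ?f"
    using graph_on_inv_into_fst[OF inj_on_fst_elem_ab[OF T_free E]] .
  have sub: "subgroup E S" using E unfolding elem_ab_def by blast
  have "fst \<in> hom (S\<lparr>carrier := E\<rparr>) P"
    using fst_hom subgroup.subset[OF sub] unfolding hom_def by auto
  then have "elem_ab p P ?L" using elem_ab_hom_image[OF Ext_group P.is_group E] by blast
  moreover have "splitting ?L ?f" using sub graph splitting_if_subgroup_graph_on by metis
  ultimately show ?thesis using that graph by blast
qed

lemma elem_ab_mem_calC:
  assumes T_free: "p_torsion_free p T"
    and E: "elem_ab p S E"
    and tL: "\<And>L. L \<in> calL p P T act \<rho> \<Longrightarrow> splitting L (tL L)"
  shows "\<exists>L\<in>calL p P T act \<rho>. E \<in> calC P T act (tL L) L"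
proof -
  obtain L f where L: "elem_ab p P L" and f: "splitting L f" and E: "E = graph_on L f"
    using elem_ab_eq_graph_on[OF T_free E] .
  have sub: "subgroup L P" using L unfolding elem_ab_def by blast
  have L_calL: "L \<in> calL p P T act \<rho>"
    unfolding calL_def using L splitting_coboundary[OF sub f] by blast
  have t: "splitting L (tL L)" by (rule tL[OF L_calL])
  define \<delta> where "\<delta> = (\<lambda>l. inv\<^bsub>T\<^esub> tL L l \<otimes>\<^bsub>T\<^esub> f l)"
  have \<delta>_closed: "\<delta> \<in> L \<rightarrow> carrier T"
    using t f unfolding \<delta>_def splitting_def by (simp add: Pi_iff)
  have twist: "tL L l \<otimes>\<^bsub>T\<^esub> \<delta> l = f l" if "l \<in> L" for l
  proof -
    have "tL L l \<in> carrier T" "f l \<in> carrier T"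
      using that t f unfolding splitting_def by auto
    then show ?thesis unfolding \<delta>_def by (simp add: T.m_assoc[symmetric])
  qed
  then have "splitting L (\<lambda>l. tL L l \<otimes>\<^bsub>T\<^esub> \<delta> l) \<longleftrightarrow> splitting L f"
    by (rule splitting_cong[OF sub])
  then have "\<delta> \<in> Z1 (P\<lparr>carrier := L\<rparr>) T act"
    using f splitting_twist_iff[OF sub t \<delta>_closed] by blast
  moreover have "E = CLdelta T (tL L) L \<delta>"
    unfolding E CLdelta_eq_graph_on using twist by (rule graph_on_cong[symmetric])
  ultimately show ?thesis using L_calL unfolding calC_def by blast
qed

lemma calC_elem_ab:
  assumes L: "L \<in> calL p P T act \<rho>" and t: "splitting L t" and C: "C \<in> calC P T act t L"
  shows "elem_ab p S C"
proof -
  obtain \<delta> where \<delta>: "\<delta> \<in> Z1 (P\<lparr>carrier := L\<rparr>) T act" and C: "C = graph_on L (\<lambda>l. t l \<otimes>\<^bsub>T\<^esub> \<delta> l)"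
    using C unfolding calC_def CLdelta_eq_graph_on by blast
  have L_ab: "elem_ab p P L" using L unfolding calL_def by blast
  then have "subgroup L P" unfolding elem_ab_def by blast
  then have "splitting L (\<lambda>l. t l \<otimes>\<^bsub>T\<^esub> \<delta> l)"
    using splitting_twist_iff[OF _ t] \<delta> unfolding Z1_def by auto
  then show ?thesis unfolding C using elem_ab_graph_on[OF L_ab] by blast
qed

end

lemma fst_image_calC:
  assumes "C \<in> calC P T act t L"
  shows "fst ` C = L"
proof -
  obtain \<delta> where "C = graph_on L (\<lambda>l. t l \<otimes>\<^bsub>T\<^esub> \<delta> l)"
    using assms unfolding calC_def CLdelta_eq_graph_on by blast
  then show ?thesis by simp
qed

theorem theorem3p1:
  fixes p d :: nat
    and P :: "('g, 'b) monoid_scheme"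
    and T :: "('t, 'c) monoid_scheme"
    and act :: "'g \<Rightarrow> 't \<Rightarrow> 't"
    and \<rho> :: "'g \<Rightarrow> 'g \<Rightarrow> 't"
    and tL :: "'g set \<Rightarrow> 'g \<Rightarrow> 't"
  assumes prime: "Factorial_Ring.prime p"
    and P: "finite_p_group p P"
    and T: "comm_group T"
    and T_Zpd: "T \<cong> Zpd p d"
    and module: "right_module P T act"
    and rho: "\<rho> \<in> Z2 P T act"
    and S_infinite: "infinite (carrier (Ext P T act \<rho>))"
    and series: "\<And>i. Tser P T act (Suc i) \<subseteq> Tser P T act i \<and>
                   card (rcosets\<^bsub>T\<lparr>carrier := Tser P T act i\<rparr>\<^esub> (Tser P T act (Suc i))) = p"
    and compl: "\<And>L. L \<in> calL p P T act \<rho> \<Longrightarrow>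
                   tL L \<in> L \<rightarrow> carrier T \<and>
                   is_complement (Ext P T act \<rho>) {(l, tL L l) | l. l \<in> L} (Tsub P T) (Lbar T L)"
  shows "{E. elem_ab p (Ext P T act \<rho>) E} = (\<Union>L\<in>calL p P T act \<rho>. calC P T act (tL L) L)
         \<and> (\<forall>L1\<in>calL p P T act \<rho>. \<forall>L2\<in>calL p P T act \<rho>.
               L1 \<noteq> L2 \<longrightarrow> calC P T act (tL L1) L1 \<inter> calC P T act (tL L2) L2 = {})"
proof -
  interpret extension P T act \<rho>
    using P T module rho unfolding extension_def extension_axioms_def finite_p_group_def by blast
  have p: "0 < p" using prime by (simp add: prime_gt_0_nat)
  have T_free: "p_torsion_free p T"
    by (rule iso_p_torsion_free[OF T.is_group Zpd_monoid[OF p] T_Zpd Zpd_p_torsion_free[OF p]])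
  have tL: "\<And>L. L \<in> calL p P T act \<rho> \<Longrightarrow> splitting L (tL L)"
    using compl splitting_if_subgroup_graph_on unfolding is_complement_def graph_on_def by blast
  have "{E. elem_ab p S E} = (\<Union>L\<in>calL p P T act \<rho>. calC P T act (tL L) L)"
    using elem_ab_mem_calC[OF T_free _ tL] calC_elem_ab[OF _ tL] by blast
  moreover have "calC P T act (tL L1) L1 \<inter> calC P T act (tL L2) L2 = {}" if "L1 \<noteq> L2" for L1 L2
    using that fst_image_calC by blast
  ultimately show ?thesis by blast
qed

end
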